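(* Let $Y$ be a mean zero random variable with variance $\sigma^2\in(0,\infty)$ and moment generating function $m(s)=\mathbb{E}[e^{sY}]$, and let $Y^*$, defined on the same probability space, have the $Y$-zero biased distribution. If $|Y^*-Y|\le c$ almost surely for some $c>0$ and $m(s)$ is finite for all $s\in[0,2/c)$, then for every $\theta\in(0,2/c)$, $$m(\theta)\le \exp\left(\frac{5\sigma^2\theta^2}{6(1-c\theta/2)}\right).$$
   Context: Zero bias distribution: for a mean zero random variable $Y$ with finite positive variance $\sigma^2$, a random variable $Y^*$ is said to have the $Y$-zero biased distribution if $\mathbb{E}[Yf(Y)]=\sigma^2\mathbb{E}[f'(Y^* )]$ for all absolutely continuous functions $f$ for which the expectation of either side exists. *)

theory Defs
  imports "HOL-Probability.Probability"
begin

text \<open>f is (locally) absolutely continuous on the real line with (a.e.) derivative g: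
  g is Lebesgue integrable on every compact interval and f is an indefinite integral of g.\<close>
definition abs_cont_deriv :: "(real \<Rightarrow> real) \<Rightarrow> (real \<Rightarrow> real) \<Rightarrow> bool" where
  "abs_cont_deriv f g \<longleftrightarrow>
     (\<forall>a b. set_integrable lborel {a..b} g) \<and>
     (\<forall>a b. a \<le> b \<longrightarrow> f b - f a = (LINT x:{a..b}|lborel. g x))"

definition zero_biased :: "'a measure \<Rightarrow> ('a \<Rightarrow> real) \<Rightarrow> ('a \<Rightarrow> real) \<Rightarrow> bool" where
  "zero_biased M Y Ystar \<longleftrightarrow>
     (\<forall>f g. abs_cont_deriv f g \<longrightarrow>
        integrable M (\<lambda>x. Y x * f (Y x)) \<longrightarrow> integrable M (\<lambda>x. g (Ystar x)) \<longrightarrow>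
        (\<integral>x. Y x * f (Y x) \<partial>M) = (\<integral>x. (Y x)\<^sup>2 \<partial>M) * (\<integral>x. g (Ystar x) \<partial>M))"

end

theory Submission
  imports Defs
begin

text \<open>Let \<open>m\<close> be the moment generating function of \<open>Y\<close>. Differentiating under the integral
  and applying the zero bias identity to \<open>f y = exp (s * y)\<close> gives
  \<open>m'(s) = \<sigma>\<^sup>2 s E[exp (s Y\<^sup>*)]\<close>. Since the logarithmic mean of two exponentials is at most
  their arithmetic mean and \<open>|Y\<^sup>* - Y| \<le> c\<close>, one has
  \<open>E[exp (s Y\<^sup>*)] (1 - s c / 2) \<le> m(s) (1 + s c / 2)\<close>, hence
  \<open>(ln m)' (s) \<le> \<sigma>\<^sup>2 (s + c s\<^sup>2 / 2) / (1 - c \<theta> / 2)\<close> on \<open>(0, \<theta>)\<close>. Integrating from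
  \<open>m(0) = 1\<close> and using \<open>c \<theta> < 2\<close> to bound \<open>c \<theta>\<^sup>3 / 6\<close> by \<open>\<theta>\<^sup>2 / 3\<close> yields the claim.\<close>

lemma exp_minus_one_le_mean:
  assumes "0 \<le> (d::real)"
  shows "exp d - 1 \<le> d * (exp d + 1) / 2"
proof -
  let ?h = "\<lambda>d. d * (exp d + 1) / 2 - exp d + 1"
  have "?h 0 \<le> ?h d"
  proof (rule DERIV_nonneg_imp_nondecreasing[OF assms])
    fix x :: real
    have D: "DERIV ?h x :> ((exp x + 1) / 2 + x * exp x / 2 - exp x)"
      by (auto intro!: derivative_eq_intros simp: algebra_simps)
    have "exp x * (1 - x) \<le> exp x * exp (-x)"
      using exp_ge_add_one_self[of "-x"] by simp
    hence "(exp x + 1) / 2 + x * exp x / 2 - exp x \<ge> 0"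
      by (simp add: exp_minus field_simps)
    with D show "\<exists>y. DERIV ?h x :> y \<and> 0 \<le> y" by blast
  qed
  thus ?thesis by simp
qed

lemma abs_exp_diff_le_mean:
  "\<bar>exp (u::real) - exp v\<bar> \<le> \<bar>u - v\<bar> * (exp u + exp v) / 2"
proof -
  have *: "exp a - exp b \<le> (a - b) * (exp a + exp b) / 2" if "b \<le> a" for a b :: real
  proof -
    have "exp b * (exp (a - b) - 1) \<le> exp b * ((a - b) * (exp (a - b) + 1) / 2)"
      using exp_minus_one_le_mean[of "a - b"] that by simp
    thus ?thesis by (simp add: algebra_simps flip: exp_add)
  qed
  show ?thesis
    using *[of v u] *[of u v] by (cases "v \<le> u") (auto simp: abs_if algebra_simps)
qed

lemma abs_exp_diff_le_max:
  "\<bar>exp (u::real) - exp v\<bar> \<le> \<bar>u - v\<bar> * max (exp u) (exp v)"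
proof -
  have "(exp u + exp v) / 2 \<le> max (exp u) (exp v)" by simp
  hence "\<bar>u - v\<bar> * ((exp u + exp v) / 2) \<le> \<bar>u - v\<bar> * max (exp u) (exp v)"
    by (rule mult_left_mono) simp
  with abs_exp_diff_le_mean[of u v] show ?thesis by simp
qed

lemma abs_mult_exp_le:
  fixes y s a b :: real
  assumes "0 \<le> s" "s \<le> a" "a < b"
  shows "\<bar>y * exp (s * y)\<bar> \<le> \<bar>y\<bar> + exp (b * y) / (b - a)"
proof (cases "y \<ge> 0")
  case True
  have "(b - a) * y * exp (a * y) \<le> exp ((b - a) * y) * exp (a * y)"
    using exp_ge_add_one_self[of "(b - a) * y"] by (intro mult_right_mono) (linarith, simp)
  also have "\<dots> = exp (b * y)" by (simp add: algebra_simps flip: exp_add)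
  finally have "y * exp (a * y) \<le> exp (b * y) / (b - a)"
    using assms by (simp add: field_simps)
  moreover have "y * exp (s * y) \<le> y * exp (a * y)"
    using assms True by (auto intro!: mult_left_mono mult_right_mono)
  ultimately show ?thesis using True by (simp add: abs_mult)
next
  case False
  have "exp (s * y) \<le> 1" using assms False by (auto simp: mult_nonneg_nonpos)
  hence "\<bar>y * exp (s * y)\<bar> \<le> \<bar>y\<bar>" by (simp add: abs_mult mult_left_le)
  moreover have "0 \<le> exp (b * y) / (b - a)" using assms by simp
  ultimately show ?thesis by linarith
qed

lemma abs_exp_mult_diff_le:
  fixes y s t a b :: real
  assumes "0 \<le> s" "s \<le> a" "0 \<le> t" "t \<le> a" "a < b"
  shows "\<bar>exp (t * y) - exp (s * y)\<bar> \<le> \<bar>t - s\<bar> * (\<bar>y\<bar> + exp (b * y) / (b - a))"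
proof -
  have "\<bar>exp (t * y) - exp (s * y)\<bar> \<le> \<bar>t * y - s * y\<bar> * max (exp (t * y)) (exp (s * y))"
    by (rule abs_exp_diff_le_max)
  also have "\<dots> = \<bar>t - s\<bar> * max \<bar>y * exp (t * y)\<bar> \<bar>y * exp (s * y)\<bar>"
    by (simp add: abs_mult max_mult_distrib_left mult.assoc flip: left_diff_distrib)
  also have "\<dots> \<le> \<bar>t - s\<bar> * (\<bar>y\<bar> + exp (b * y) / (b - a))"
    using abs_mult_exp_le[of s a b y] abs_mult_exp_le[of t a b y] assms
    by (intro mult_left_mono) auto
  finally show ?thesis .
qed

lemma DERIV_le_mult_imp_le_exp:
  fixes f f' G g :: "real \<Rightarrow> real"
  assumes "a \<le> b" and cont: "continuous_on {a..b} f" "continuous_on {a..b} G"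
    and f': "\<And>s. a < s \<Longrightarrow> s < b \<Longrightarrow> (f has_real_derivative f' s) (at s)"
    and g: "\<And>s. a < s \<Longrightarrow> s < b \<Longrightarrow> (G has_real_derivative g s) (at s)"
    and le: "\<And>s. a < s \<Longrightarrow> s < b \<Longrightarrow> f' s \<le> g s * f s"
    and pos: "\<And>s. a \<le> s \<Longrightarrow> s \<le> b \<Longrightarrow> 0 < f s"
  shows "f b \<le> f a * exp (G b - G a)"
proof -
  have "ln (f b) - G b \<le> ln (f a) - G a"
  proof (rule DERIV_nonpos_imp_decreasing_open[OF \<open>a \<le> b\<close>])
    fix s assume s: "a < s" "s < b"
    have "((\<lambda>s. ln (f s) - G s) has_real_derivative f' s / f s - g s) (at s)"
      using pos[of s] s by (auto intro!: derivative_eq_intros f' g)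
    moreover have "f' s / f s - g s \<le> 0"
      using le[OF s] pos[of s] s by (simp add: field_simps)
    ultimately show "\<exists>y. ((\<lambda>s. ln (f s) - G s) has_real_derivative y) (at s) \<and> y \<le> 0"
      by blast
  next
    show "continuous_on {a..b} (\<lambda>s. ln (f s) - G s)"
      using cont pos by (intro continuous_intros) (auto simp: less_imp_neq[symmetric])
  qed
  hence "exp (ln (f b)) \<le> exp (ln (f a) + (G b - G a))" by simp
  thus ?thesis using pos[of a] pos[of b] \<open>a \<le> b\<close> by (simp add: exp_add)
qed

definition mgf :: "'a measure \<Rightarrow> ('a \<Rightarrow> real) \<Rightarrow> real \<Rightarrow> real" where
  "mgf M Y s = (\<integral>x. exp (s * Y x) \<partial>M)"

lemma integrable_mult_exp:
  fixes Y :: "'a \<Rightarrow> real"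
  assumes "integrable M Y"
    and exp_int: "\<And>t. 0 \<le> t \<Longrightarrow> t \<le> b \<Longrightarrow> integrable M (\<lambda>x. exp (t * Y x))"
    and "0 \<le> s" "s < b"
  shows "integrable M (\<lambda>x. Y x * exp (s * Y x))"
proof (rule Bochner_Integration.integrable_bound)
  show "integrable M (\<lambda>x. \<bar>Y x\<bar> + exp (b * Y x) / (b - s))"
    using assms by (intro Bochner_Integration.integrable_add integrable_abs integrable_divide) auto
  show "AE x in M. norm (Y x * exp (s * Y x)) \<le> norm (\<bar>Y x\<bar> + exp (b * Y x) / (b - s))"
    using abs_mult_exp_le[of s s b] assms by auto
  show "(\<lambda>x. Y x * exp (s * Y x)) \<in> borel_measurable M"
    using borel_measurable_integrable[OF \<open>integrable M Y\<close>] by measurable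
qed

lemma has_real_derivative_imp_diff_quotient_LIMSEQ:
  assumes "(f has_real_derivative D) (at s)" and "X \<longlonglongrightarrow> s" and "\<And>i. X i \<noteq> s"
  shows "(\<lambda>i. (f (X i) - f s) / (X i - s)) \<longlonglongrightarrow> D"
proof -
  have "((\<lambda>t. (f t - f s) / (t - s)) \<longlongrightarrow> D) (at s)"
    using assms(1) by (simp add: has_field_derivative_iff)
  with assms(2,3) show ?thesis unfolding tendsto_at_iff_sequentially comp_def by auto
qed

text \<open>Differentiation under the integral sign, justified by dominated convergence; the
  derivative at the left end point \<open>0\<close> is one-sided, since \<open>exp (t * Y)\<close> need not be integrable
  for \<open>t < 0\<close>.\<close>
lemma mgf_has_real_derivative_within:
  fixes Y :: "'a \<Rightarrow> real"
  assumes Y: "integrable M Y"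
    and exp_int: "\<And>t. 0 \<le> t \<Longrightarrow> t \<le> b \<Longrightarrow> integrable M (\<lambda>x. exp (t * Y x))"
    and "a < b" and s: "s \<in> {0..a}"
  shows "(mgf M Y has_real_derivative (\<integral>x. Y x * exp (s * Y x) \<partial>M)) (at s within {0..a})"
proof -
  define w where "w x = \<bar>Y x\<bar> + exp (b * Y x) / (b - a)" for x
  have w: "integrable M w"
    unfolding w_def using assms
    by (intro Bochner_Integration.integrable_add integrable_abs integrable_divide) auto
  have dom: "\<bar>exp (t * Y x) - exp (s * Y x)\<bar> \<le> \<bar>t - s\<bar> * w x" if "t \<in> {0..a}" for t x
    unfolding w_def using s that \<open>a < b\<close> by (intro abs_exp_mult_diff_le) auto
  have "((\<lambda>t. (mgf M Y t - mgf M Y s) / (t - s)) \<longlongrightarrow> (\<integral>x. Y x * exp (s * Y x) \<partial>M))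
          (at s within {0..a})"
    unfolding tendsto_at_iff_sequentially comp_def
  proof (intro allI impI)
    fix X :: "nat \<Rightarrow> real"
    assume X: "\<forall>i. X i \<in> {0..a} - {s}" and "X \<longlonglongrightarrow> s"
    have quotient: "(mgf M Y (X i) - mgf M Y s) / (X i - s)
        = (\<integral>x. (exp (X i * Y x) - exp (s * Y x)) / (X i - s) \<partial>M)" for i
      unfolding mgf_def using X[rule_format, of i] s \<open>a < b\<close>
      by (subst integral_divide_zero, subst Bochner_Integration.integral_diff)
         (auto intro!: exp_int)
    have "(\<lambda>i. \<integral>x. (exp (X i * Y x) - exp (s * Y x)) / (X i - s) \<partial>M)
            \<longlonglongrightarrow> (\<integral>x. Y x * exp (s * Y x) \<partial>M)"
    proof (rule integral_dominated_convergence[where w=w])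
      show "AE x in M. (\<lambda>i. (exp (X i * Y x) - exp (s * Y x)) / (X i - s))
              \<longlonglongrightarrow> Y x * exp (s * Y x)"
        using X \<open>X \<longlonglongrightarrow> s\<close>
        by (intro AE_I2 has_real_derivative_imp_diff_quotient_LIMSEQ)
          (auto intro!: derivative_eq_intros simp: mult.commute)
      show "AE x in M. norm ((exp (X i * Y x) - exp (s * Y x)) / (X i - s)) \<le> w x" for i
        using dom[of "X i"] X by (auto simp: divide_le_eq abs_divide mult.commute)
    qed (use w borel_measurable_integrable[OF Y] in auto)
    thus "(\<lambda>i. (mgf M Y (X i) - mgf M Y s) / (X i - s)) \<longlonglongrightarrow> (\<integral>x. Y x * exp (s * Y x) \<partial>M)"
      by (simp add: quotient)
  qed
  thus ?thesis by (simp add: has_field_derivative_iff)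
qed

lemma mgf_continuous_on:
  fixes Y :: "'a \<Rightarrow> real"
  assumes "integrable M Y"
    and "\<And>t. 0 \<le> t \<Longrightarrow> t \<le> b \<Longrightarrow> integrable M (\<lambda>x. exp (t * Y x))"
    and "a < b"
  shows "continuous_on {0..a} (mgf M Y)"
  using mgf_has_real_derivative_within[OF assms] by (rule DERIV_continuous_on)

lemma mgf_has_real_derivative:
  fixes Y :: "'a \<Rightarrow> real"
  assumes "integrable M Y"
    and "\<And>t. 0 \<le> t \<Longrightarrow> t \<le> b \<Longrightarrow> integrable M (\<lambda>x. exp (t * Y x))"
    and "0 < s" "s < b"
  shows "(mgf M Y has_real_derivative (\<integral>x. Y x * exp (s * Y x) \<partial>M)) (at s)"
proof -
  have "(mgf M Y has_real_derivative (\<integral>x. Y x * exp (s * Y x) \<partial>M)) (at s within {0..(s + b) / 2})"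
    using assms by (intro mgf_has_real_derivative_within) auto
  moreover have "at s within {0..(s + b) / 2} = at s"
    using assms by (intro at_within_Icc_at) auto
  ultimately show ?thesis by simp
qed

lemma (in prob_space) mgf_pos:
  assumes "integrable M (\<lambda>x. exp (s * Y x))"
  shows "0 < mgf M Y s"
  unfolding mgf_def using assms by (intro expectation_greater) auto

lemma abs_cont_deriv_of_has_real_derivative:
  assumes "\<And>x. (f has_real_derivative f' x) (at x)" and "continuous_on UNIV f'"
  shows "abs_cont_deriv f f'"
  unfolding abs_cont_deriv_def
proof (intro conjI allI impI)
  fix a b :: real
  show "set_integrable lborel {a..b} f'"
    using assms(2) by (intro borel_integrable_atLeastAtMost') (auto intro: continuous_on_subset)
  assume "a \<le> b"
  have "(LINT x:{a..b}|lborel. f' x) = f b - f a"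
    unfolding set_lebesgue_integral_def
  proof (rule integral_FTC_atLeastAtMost[OF \<open>a \<le> b\<close>])
    show "continuous_on {a..b} f'" using assms(2) by (rule continuous_on_subset) simp
    show "(f has_vector_derivative f' x) (at x within {a..b})" for x
      using assms(1)[of x]
      by (simp add: has_real_derivative_iff_has_vector_derivative has_vector_derivative_at_within)
  qed
  thus "f b - f a = (LINT x:{a..b}|lborel. f' x)" by simp
qed

lemma zero_biased_exp:
  fixes Y Ystar :: "'a \<Rightarrow> real"
  assumes "zero_biased M Y Ystar"
    and "integrable M (\<lambda>x. Y x * exp (s * Y x))" and "integrable M (\<lambda>x. exp (s * Ystar x))"
  shows "(\<integral>x. Y x * exp (s * Y x) \<partial>M) = (\<integral>x. (Y x)\<^sup>2 \<partial>M) * s * (\<integral>x. exp (s * Ystar x) \<partial>M)"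
proof -
  have "abs_cont_deriv (\<lambda>y. exp (s * y)) (\<lambda>y. s * exp (s * y))"
    by (rule abs_cont_deriv_of_has_real_derivative)
       (auto intro!: derivative_eq_intros continuous_intros)
  moreover have "integrable M (\<lambda>x. s * exp (s * Ystar x))" using assms(3) by simp
  ultimately show ?thesis
    using assms(1)[unfolded zero_biased_def, rule_format, of "\<lambda>y. exp (s * y)"] assms(2)
    by (simp add: mult.assoc)
qed

lemma exp_mult_le_of_abs_diff_le:
  fixes s u v c :: real
  assumes "0 \<le> s" "\<bar>v - u\<bar> \<le> c"
  shows "exp (s * v) * (1 - s * c / 2) \<le> exp (s * u) * (1 + s * c / 2)"
proof -
  have "exp (s * v) - exp (s * u) \<le> \<bar>s * v - s * u\<bar> * (exp (s * v) + exp (s * u)) / 2"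
    using abs_exp_diff_le_mean by (rule order_trans[OF abs_ge_self])
  also have "\<dots> \<le> s * c * (exp (s * v) + exp (s * u)) / 2"
    using assms by (intro divide_right_mono mult_right_mono add_nonneg_nonneg)
      (auto simp: abs_mult mult_left_mono simp flip: right_diff_distrib)
  finally show ?thesis by (simp add: algebra_simps)
qed

lemma integrable_exp_of_AE_abs_diff_le:
  fixes Y Ystar :: "'a \<Rightarrow> real"
  assumes "Ystar \<in> borel_measurable M" and "AE x in M. \<bar>Ystar x - Y x\<bar> \<le> c"
    and "0 \<le> s" and "integrable M (\<lambda>x. exp (s * Y x))"
  shows "integrable M (\<lambda>x. exp (s * Ystar x))"
proof (rule Bochner_Integration.integrable_bound)
  show "integrable M (\<lambda>x. exp (s * c) * exp (s * Y x))" using assms(4) by simp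
  show "AE x in M. norm (exp (s * Ystar x)) \<le> norm (exp (s * c) * exp (s * Y x))"
    using assms(2)
  proof eventually_elim
    case (elim x)
    hence "s * Ystar x \<le> s * c + s * Y x"
      using \<open>0 \<le> s\<close> by (simp add: abs_le_iff mult_left_mono flip: distrib_left)
    thus ?case by (simp flip: exp_add)
  qed
qed (use assms(1) in simp)

lemma mgf_le_of_AE_abs_diff_le:
  fixes Y Ystar :: "'a \<Rightarrow> real"
  assumes "Ystar \<in> borel_measurable M" and "AE x in M. \<bar>Ystar x - Y x\<bar> \<le> c"
    and "0 \<le> s" and "integrable M (\<lambda>x. exp (s * Y x))"
  shows "mgf M Ystar s * (1 - s * c / 2) \<le> mgf M Y s * (1 + s * c / 2)"
proof -
  have "(\<integral>x. exp (s * Ystar x) * (1 - s * c / 2) \<partial>M) \<le> (\<integral>x. exp (s * Y x) * (1 + s * c / 2) \<partial>M)"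
    using assms(2) integrable_exp_of_AE_abs_diff_le[OF assms] assms(3,4)
    by (intro integral_mono_AE) (auto elim!: eventually_mono intro: exp_mult_le_of_abs_diff_le)
  thus ?thesis by (simp add: mgf_def)
qed

lemma zero_biased_mgf_derivative_le:
  fixes Y Ystar :: "'a \<Rightarrow> real"
  assumes "zero_biased M Y Ystar"
    and "Ystar \<in> borel_measurable M" and "AE x in M. \<bar>Ystar x - Y x\<bar> \<le> c"
    and "0 \<le> s" and "0 < K" "K \<le> 1 - s * c / 2"
    and "integrable M (\<lambda>x. exp (s * Y x))" and "integrable M (\<lambda>x. Y x * exp (s * Y x))"
  shows "(\<integral>x. Y x * exp (s * Y x) \<partial>M) \<le> (\<integral>x. (Y x)\<^sup>2 \<partial>M) * (s + c * s\<^sup>2 / 2) / K * mgf M Y s"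
proof -
  have "mgf M Ystar s * K \<le> mgf M Ystar s * (1 - s * c / 2)"
    using assms(6) by (intro mult_left_mono) (auto simp: mgf_def)
  also have "\<dots> \<le> mgf M Y s * (1 + s * c / 2)"
    using assms(2,3,4,7) by (rule mgf_le_of_AE_abs_diff_le)
  finally have Ystar_le: "mgf M Ystar s \<le> (1 + s * c / 2) / K * mgf M Y s"
    using assms(5) by (simp add: field_simps)
  have "(\<integral>x. Y x * exp (s * Y x) \<partial>M) = (\<integral>x. (Y x)\<^sup>2 \<partial>M) * s * mgf M Ystar s"
    unfolding mgf_def
    using assms(1,8) integrable_exp_of_AE_abs_diff_le[OF assms(2,3,4,7)] by (rule zero_biased_exp)
  also have "\<dots> \<le> (\<integral>x. (Y x)\<^sup>2 \<partial>M) * s * ((1 + s * c / 2) / K * mgf M Y s)"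
    using Ystar_le assms(4) by (intro mult_left_mono) auto
  also have "\<dots> = (\<integral>x. (Y x)\<^sup>2 \<partial>M) * (s + c * s\<^sup>2 / 2) / K * mgf M Y s"
    using assms(5) by (simp add: power2_eq_square field_simps)
  finally show ?thesis .
qed

theorem mainTheorem5:
  fixes M :: "'a measure" and Y Ystar :: "'a \<Rightarrow> real" and c \<theta> :: real
  assumes "prob_space M"
    and "Y \<in> borel_measurable M" and "Ystar \<in> borel_measurable M"
    and "integrable M Y" and "(\<integral>x. Y x \<partial>M) = 0"
    and "integrable M (\<lambda>x. (Y x)\<^sup>2)" and "(\<integral>x. (Y x)\<^sup>2 \<partial>M) > 0"
    and "zero_biased M Y Ystar"
    and "c > 0"
    and "AE x in M. \<bar>Ystar x - Y x\<bar> \<le> c"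
    and "\<And>s. 0 \<le> s \<Longrightarrow> s < 2 / c \<Longrightarrow> integrable M (\<lambda>x. exp (s * Y x))"
    and "0 < \<theta>" and "\<theta> < 2 / c"
  shows "(\<integral>x. exp (\<theta> * Y x) \<partial>M)
           \<le> exp (5 * (\<integral>x. (Y x)\<^sup>2 \<partial>M) * \<theta>\<^sup>2 / (6 * (1 - c * \<theta> / 2)))"
proof -
  interpret prob_space M by fact
  define \<sigma>2 K b where "\<sigma>2 = (\<integral>x. (Y x)\<^sup>2 \<partial>M)" and "K = 1 - c * \<theta> / 2" and "b = (\<theta> + 2 / c) / 2"
  define G where "G s = \<sigma>2 * (s\<^sup>2 / 2 + c * s ^ 3 / 6) / K" for s
  have K: "0 < K" and b: "\<theta> < b" "b < 2 / c"
    using assms(9,13) by (auto simp: K_def b_def field_simps)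
  have exp_int: "integrable M (\<lambda>x. exp (t * Y x))" if "0 \<le> t" "t \<le> b" for t
    using assms(11) that b by auto
  have "mgf M Y \<theta> \<le> mgf M Y 0 * exp (G \<theta> - G 0)"
  proof (rule DERIV_le_mult_imp_le_exp)
    fix s assume s: "0 < s" "s < \<theta>"
    hence "K \<le> 1 - s * c / 2" using assms(9) by (simp add: K_def mult.commute)
    with s b K show "(\<integral>x. Y x * exp (s * Y x) \<partial>M) \<le> \<sigma>2 * (s + c * s\<^sup>2 / 2) / K * mgf M Y s"
      unfolding \<sigma>2_def
      by (intro zero_biased_mgf_derivative_le[OF assms(8,3,10)] exp_int
          integrable_mult_exp[OF assms(4) exp_int]) auto
  qed (use assms(4,12) b exp_int K mgf_pos in \<open>auto simp: G_def intro!: mgf_continuous_on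
    mgf_has_real_derivative derivative_eq_intros continuous_intros\<close>)
  also have "\<dots> \<le> exp (5 * \<sigma>2 * \<theta>\<^sup>2 / (6 * K))"
  proof -
    have "c * \<theta> ^ 3 \<le> 2 * \<theta>\<^sup>2"
      using K assms(12) by (simp add: K_def power2_eq_square power3_eq_cube)
    hence "G \<theta> \<le> 5 * \<sigma>2 * \<theta>\<^sup>2 / (6 * K)"
      unfolding G_def using K assms(7) by (auto simp: \<sigma>2_def field_simps intro!: mult_left_mono)
    thus ?thesis by (simp add: mgf_def G_def prob_space)
  qed
  finally show ?thesis by (simp add: mgf_def \<sigma>2_def K_def)
qed

end
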